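(* There is a constant $c > 0$ such that every chordal graph on $n$ vertices has at least $c \cdot 2^n$ perfect elimination orderings; that is, the number of perfect elimination orderings of an $n$-vertex chordal graph is $\Omega(2^n)$.
   Context: A graph is chordal if every cycle of length at least 4 has a chord (an edge joining two non-consecutive vertices of the cycle). A vertex is simplicial if its neighbourhood is a clique. A perfect elimination ordering (PEO) of a graph $G$ is an ordering $(v_1, \ldots, v_n)$ of $V(G)$ such that for each $i$, the set of neighbours of $v_i$ in the subgraph induced by $\{v_i, v_{i+1}, \ldots, v_n\}$ is a clique. *)

theory Defs
  imports Complex_Main
begin

definition simple_graph :: "'a set \<Rightarrow> ('a \<Rightarrow> 'a \<Rightarrow> bool) \<Rightarrow> bool" where
  "simple_graph V E \<longleftrightarrow> finite V \<and>
     (\<forall>x y. E x y \<longrightarrow> x \<in> V \<and> y \<in> V) \<and>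
     (\<forall>x y. E x y \<longrightarrow> E y x) \<and> (\<forall>x. \<not> E x x)"

definition is_cycle :: "'a set \<Rightarrow> ('a \<Rightarrow> 'a \<Rightarrow> bool) \<Rightarrow> 'a list \<Rightarrow> bool" where
  "is_cycle V E vs \<longleftrightarrow> length vs \<ge> 3 \<and> distinct vs \<and> set vs \<subseteq> V \<and>
     (\<forall>i < length vs. E (vs ! i) (vs ! ((i + 1) mod length vs)))"

definition has_chord :: "('a \<Rightarrow> 'a \<Rightarrow> bool) \<Rightarrow> 'a list \<Rightarrow> bool" where
  "has_chord E vs \<longleftrightarrow> (\<exists>i < length vs. \<exists>j < length vs. i \<noteq> j \<and>
     j \<noteq> (i + 1) mod length vs \<and> i \<noteq> (j + 1) mod length vs \<and>
     E (vs ! i) (vs ! j))"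

definition chordal :: "'a set \<Rightarrow> ('a \<Rightarrow> 'a \<Rightarrow> bool) \<Rightarrow> bool" where
  "chordal V E \<longleftrightarrow> (\<forall>vs. is_cycle V E vs \<and> length vs \<ge> 4 \<longrightarrow> has_chord E vs)"

definition is_clique :: "('a \<Rightarrow> 'a \<Rightarrow> bool) \<Rightarrow> 'a set \<Rightarrow> bool" where
  "is_clique E S \<longleftrightarrow> (\<forall>x\<in>S. \<forall>y\<in>S. x \<noteq> y \<longrightarrow> E x y)"

definition is_peo :: "'a set \<Rightarrow> ('a \<Rightarrow> 'a \<Rightarrow> bool) \<Rightarrow> 'a list \<Rightarrow> bool" where
  "is_peo V E \<sigma> \<longleftrightarrow> distinct \<sigma> \<and> set \<sigma> = V \<and>
     (\<forall>i < length \<sigma>. is_clique E {u \<in> set (drop i \<sigma>). E (\<sigma> ! i) u})"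

end

theory Submission
  imports Defs
begin

text \<open>
  The proof rests on Dirac's lemma: a chordal graph is complete or has two nonadjacent
  simplicial vertices; in particular every chordal graph with at least two vertices has two
  distinct simplicial vertices.  Removing a simplicial vertex v leaves a chordal induced
  subgraph, and prepending v to any perfect elimination ordering of it gives one of the whole
  graph.  Orderings starting with different vertices are different, so the number of
  orderings at least doubles with every added vertex, which gives the bound by induction.
\<close>

definition induced :: "'a set \<Rightarrow> ('a \<Rightarrow> 'a \<Rightarrow> bool) \<Rightarrow> 'a \<Rightarrow> 'a \<Rightarrow> bool" where
  "induced U E = (\<lambda>a b. E a b \<and> a \<in> U \<and> b \<in> U)"

definition simplicial :: "'a set \<Rightarrow> ('a \<Rightarrow> 'a \<Rightarrow> bool) \<Rightarrow> 'a \<Rightarrow> bool" where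
  "simplicial V E v \<longleftrightarrow> v \<in> V \<and> is_clique E {u \<in> V. E v u}"

abbreviation peos :: "'a set \<Rightarrow> ('a \<Rightarrow> 'a \<Rightarrow> bool) \<Rightarrow> 'a list set" where
  "peos V E \<equiv> {\<sigma>. is_peo V E \<sigma>}"

lemma clique_subset: "is_clique E A \<Longrightarrow> B \<subseteq> A \<Longrightarrow> is_clique E B"
  unfolding is_clique_def by blast

lemma clique_induced_iff: "A \<subseteq> U \<Longrightarrow> is_clique (induced U E) A \<longleftrightarrow> is_clique E A"
  unfolding is_clique_def induced_def by blast

text \<open>Induced subgraphs of simple (chordal) graphs are simple (chordal): every cycle of
  the subgraph is a cycle of the whole graph, and its chords stay inside the subgraph.\<close>
lemma simple_graph_induced: "simple_graph V E \<Longrightarrow> U \<subseteq> V \<Longrightarrow> simple_graph U (induced U E)"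
  unfolding simple_graph_def induced_def by (auto intro: finite_subset)

lemma chordal_induced:
  assumes "chordal V E" "U \<subseteq> V"
  shows "chordal U (induced U E)"
  unfolding chordal_def
proof (intro allI impI)
  fix vs assume cyc: "is_cycle U (induced U E) vs \<and> 4 \<le> length vs"
  hence "is_cycle V E vs" using assms(2) unfolding is_cycle_def induced_def by auto
  hence "has_chord E vs" using cyc assms(1) unfolding chordal_def by blast
  moreover have "set vs \<subseteq> U" using cyc unfolding is_cycle_def by simp
  ultimately show "has_chord (induced U E) vs" unfolding has_chord_def induced_def
    by (auto simp: subset_iff) (metis nth_mem)
qed

lemma simplicial_of_induced:
  assumes "U \<subseteq> V" and simp_U: "simplicial U (induced U E) v"
    and nbrs: "\<And>u. u \<in> V \<Longrightarrow> E v u \<Longrightarrow> u \<in> U"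
  shows "simplicial V E v"
proof -
  have "{u \<in> V. E v u} = {u \<in> U. induced U E v u}"
    using assms unfolding simplicial_def induced_def by auto
  thus ?thesis using simp_U assms(1) clique_induced_iff[of "{u \<in> U. induced U E v u}" U E]
    unfolding simplicial_def by auto
qed

definition chordless_walk :: "('a \<Rightarrow> 'a \<Rightarrow> bool) \<Rightarrow> 'a list \<Rightarrow> bool" where
  "chordless_walk E P \<longleftrightarrow> successively E P \<and>
     (\<forall>i j. i + 1 < j \<and> j < length P \<longrightarrow> \<not> E (P ! i) (P ! j))"

lemma walk_shortcut:
  assumes walk: "successively E P" and ij: "i + 1 < j" "j < length P"
    and chord: "E (P ! i) (P ! j)"
  defines "P' \<equiv> take (Suc i) P @ drop j P"
  shows "successively E P'" "length P' < length P" "P' \<noteq> []"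
    "hd P' = hd P" "last P' = last P" "set P' \<subseteq> set P"
proof -
  have "last (take (Suc i) P) = P ! i" using ij by (simp add: take_Suc_conv_app_nth)
  moreover have "hd (drop j P) = P ! j" using ij by (simp add: hd_drop_conv_nth)
  moreover have "successively E (take (Suc i) P)" "successively E (drop j P)"
    using walk by (metis append_take_drop_id successively_append_iff)+
  ultimately show "successively E P'"
    unfolding P'_def successively_append_iff using chord by simp
  show "length P' < length P" "P' \<noteq> []" "last P' = last P"
    unfolding P'_def using ij by auto
  show "hd P' = hd P" unfolding P'_def using ij by (cases P) auto
  show "set P' \<subseteq> set P"
    unfolding P'_def using set_take_subset set_drop_subset by fastforce
qed

lemma chordless_subwalk:
  assumes "successively E P" "P \<noteq> []"
  shows "\<exists>P'. chordless_walk E P' \<and> P' \<noteq> [] \<and> hd P' = hd P \<and> last P' = last P \<and>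
    set P' \<subseteq> set P"
  using assms
proof (induction "length P" arbitrary: P rule: less_induct)
  case less
  show ?case
  proof (cases "chordless_walk E P")
    case True thus ?thesis using less.prems by blast
  next
    case False
    then obtain i j where ij: "i + 1 < j" "j < length P" "E (P ! i) (P ! j)"
      using less.prems(1) unfolding chordless_walk_def by blast
    note short = walk_shortcut[OF less.prems(1) ij]
    show ?thesis using less.hyps[OF short(2,1,3)] short(4-6) by auto
  qed
qed

text \<open>In a loopless graph, a chordless walk with distinct ends repeats no vertex: a repeated
  vertex would make one of its walk-neighbours a chord.\<close>
lemma chordless_walk_distinct:
  assumes walk: "chordless_walk E P" and irr: "\<And>a. \<not> E a a" and ends: "hd P \<noteq> last P"
  shows "distinct P"
proof -
  have step: "E (P ! k) (P ! Suc k)" if "Suc k < length P" for k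
    using walk that successively_nth unfolding chordless_walk_def by blast
  have no_chord: "\<not> E (P ! k) (P ! l)" if "k + 1 < l" "l < length P" for k l
    using walk that unfolding chordless_walk_def by blast
  have "P ! i \<noteq> P ! j" if ij: "i < j" "j < length P" for i j
  proof
    assume eq: "P ! i = P ! j"
    consider "j = Suc i" | "Suc i < j" "Suc j < length P" | "Suc i < j" "0 < i"
      | "i = 0" "j = length P - 1" using ij by linarith
    then show False
    proof cases
      case 1 thus False using step[of i] ij eq irr by simp
    next
      case 2 thus False using step[of j] no_chord[of i "Suc j"] eq by simp
    next
      case 3 thus False using step[of "i - 1"] no_chord[of "i - 1" j] eq ij by simp
    next
      case 4
      have "P \<noteq> []" using ij by auto
      thus False using 4 ends eq by (simp add: hd_conv_nth last_conv_nth)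
    qed
  qed
  thus ?thesis unfolding distinct_conv_nth by (metis linorder_neqE_nat)
qed

lemma closing_vertex_cycle:
  assumes sym: "\<And>a b. E a b \<Longrightarrow> E b a"
    and P: "successively E P" "distinct P" "2 \<le> length P" "set P \<subseteq> V"
    and x: "x \<in> V" "x \<notin> set P" "E x (hd P)" "E x (last P)"
  shows "is_cycle V E (x # P)"
  unfolding is_cycle_def
proof (intro conjI allI impI)
  let ?L = "x # P"
  show "3 \<le> length ?L" "distinct ?L" "set ?L \<subseteq> V" using P x by auto
  have P_ends: "P ! 0 = hd P" "P ! (length P - 1) = last P"
    using P(3) by (cases P; simp add: hd_conv_nth last_conv_nth)+
  fix k assume k: "k < length ?L"
  consider "k = 0" | "0 < k" "k + 1 < length ?L" | "k + 1 = length ?L" using k by linarith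
  then show "E (?L ! k) (?L ! ((k + 1) mod length ?L))"
  proof cases
    case 1 thus ?thesis using x(3) P(3) P_ends(1) by (cases P) auto
  next
    case 2 thus ?thesis using successively_nth[OF P(1), of "k - 1"] by simp
  next
    case 3 thus ?thesis using sym[OF x(4)] P_ends(2) P(3) by (cases P) (auto simp: nth_Cons')
  qed
qed

lemma chordless_cycle_not_chordal:
  assumes sym: "\<And>a b. E a b \<Longrightarrow> E b a"
    and P: "chordless_walk E P" "distinct P" "3 \<le> length P" "set P \<subseteq> V"
    and x: "x \<in> V" "x \<notin> set P" "E x (hd P)" "E x (last P)"
    and x_inner: "\<And>k. 0 < k \<Longrightarrow> k < length P - 1 \<Longrightarrow> \<not> E x (P ! k)"
  shows "\<not> chordal V E"
proof
  assume ch: "chordal V E"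
  define L where "L = x # P"
  define m where "m = length L"
  have m: "m = length P + 1" and L_nth: "\<And>k. L ! Suc k = P ! k"
    unfolding m_def L_def by simp_all
  have cyc: "is_cycle V E L"
    unfolding L_def using P x by (intro closing_vertex_cycle[OF sym]) (auto simp: chordless_walk_def)
  have no_chord: "\<not> E (L ! i) (L ! j)"
    if ij: "i < j" "j < m" "j \<noteq> (i + 1) mod m" "i \<noteq> (j + 1) mod m" for i j
  proof -
    have "(i + 1) mod m = i + 1" using ij by simp
    hence gap: "i + 1 < j" using ij by simp
    show ?thesis
    proof (cases i)
      case 0
      have "j + 1 \<noteq> m" using ij 0 by auto
      hence "0 < j - 1" "j - 1 < length P - 1" using ij gap 0 m by auto
      thus ?thesis using x_inner[of "j - 1"] L_nth[of "j - 1"] 0 unfolding L_def by simp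
    next
      case (Suc i')
      have "i' + 1 < j - 1" "j - 1 < length P" using ij gap Suc m by auto
      moreover have "L ! j = P ! (j - 1)" using L_nth[of "j - 1"] gap by simp
      ultimately show ?thesis using P(1) L_nth[of i'] Suc unfolding chordless_walk_def by auto
    qed
  qed
  have "4 \<le> length L" using P(3) unfolding L_def by simp
  then obtain i j where ij: "i < m" "j < m" "i \<noteq> j" "j \<noteq> (i + 1) mod m"
      "i \<noteq> (j + 1) mod m" "E (L ! i) (L ! j)"
    using ch cyc unfolding chordal_def has_chord_def m_def by blast
  show False
  proof (cases "i < j")
    case True thus False using no_chord[of i j] ij by simp
  next
    case False thus False using no_chord[of j i] ij sym[OF ij(6)] by simp
  qed
qed

text \<open>Key separation fact: in a chordal graph, two nonadjacent neighbours s, t of x are not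
  joined by any walk whose inner vertices avoid x and its neighbourhood; otherwise a
  chordless shortening of such a walk, closed by x, would be a chordless cycle.\<close>
lemma chordal_no_walk_avoiding_neighbourhood:
  assumes sg: "simple_graph V E" and ch: "chordal V E"
    and x: "x \<in> V" and W: "W \<subseteq> V" "x \<notin> W" "\<And>w. w \<in> W \<Longrightarrow> \<not> E x w"
    and st: "E x s" "E x t" "s \<noteq> t" "\<not> E s t"
    and Q: "set Q \<subseteq> W" "successively E (s # Q @ [t])"
  shows False
proof -
  have sym: "\<And>a b. E a b \<Longrightarrow> E b a" and irr: "\<And>a. \<not> E a a"
    and inV: "\<And>a b. E a b \<Longrightarrow> a \<in> V \<and> b \<in> V"
    using sg unfolding simple_graph_def by blast+
  obtain P where P: "chordless_walk E P" "P \<noteq> []" "hd P = s" "last P = t"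
      "set P \<subseteq> insert s (insert t W)"
    using chordless_subwalk[OF Q(2)] Q(1) by fastforce
  have dist: "distinct P" using chordless_walk_distinct[OF P(1) irr] P(3,4) st(3) by simp
  have "length P \<noteq> 1" using P(2-4) st(3) by (cases P) auto
  moreover have "length P \<noteq> 2"
  proof
    assume two: "length P = 2"
    have "E (P ! 0) (P ! 1)" using P(1) two successively_nth unfolding chordless_walk_def by fastforce
    thus False using two P(2-4) st(4) by (simp add: hd_conv_nth last_conv_nth)
  qed
  moreover have "length P \<noteq> 0" using P(2) by simp
  ultimately have len: "3 \<le> length P" by linarith
  have inner: "\<not> E x (P ! k)" if k: "0 < k" "k < length P - 1" for k
  proof -
    have "P ! 0 = s" "P ! (length P - 1) = t" using P(2-4) by (simp_all add: hd_conv_nth last_conv_nth)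
    moreover have "P ! k \<noteq> P ! 0" "P ! k \<noteq> P ! (length P - 1)"
      using nth_eq_iff_index_eq[OF dist, of k 0] nth_eq_iff_index_eq[OF dist, of k "length P - 1"] k P(2)
      by auto
    ultimately have "P ! k \<noteq> s" "P ! k \<noteq> t" by simp_all
    moreover have "P ! k \<in> set P" using k by simp
    ultimately show ?thesis using P(5) W(3) by blast
  qed
  have "x \<noteq> s" "x \<noteq> t" using st irr by auto
  hence "x \<notin> set P" using P(5) W(2) by blast
  moreover have "set P \<subseteq> V" using P(5) W(1) inV st by blast
  ultimately have "\<not> chordal V E"
    using chordless_cycle_not_chordal[OF sym P(1) dist len _ x] P(3,4) st inner by blast
  thus False using ch by contradiction
qed

lemma walk_of_rtranclp:
  assumes "(induced W E)\<^sup>*\<^sup>* a b" "a \<in> W"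
  shows "\<exists>Q. Q \<noteq> [] \<and> hd Q = a \<and> last Q = b \<and> set Q \<subseteq> W \<and> successively E Q"
  using assms(1)
proof (induction rule: rtranclp_induct)
  case base thus ?case using assms(2) by (intro exI[of _ "[a]"]) simp
next
  case (step b c)
  then obtain Q where Q: "Q \<noteq> []" "hd Q = a" "last Q = b" "set Q \<subseteq> W" "successively E Q"
    by blast
  have "successively E (Q @ [c])" using Q step(2) by (simp add: successively_append_iff induced_def)
  thus ?case using Q step(2) unfolding induced_def by (intro exI[of _ "Q @ [c]"]) auto
qed

lemma attachments_of_connected_set_clique:
  assumes sg: "simple_graph V E" and ch: "chordal V E"
    and x: "x \<in> V" and W: "W \<subseteq> V" "x \<notin> W" "\<And>w. w \<in> W \<Longrightarrow> \<not> E x w"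
    and C: "C \<subseteq> W" "\<And>c c'. c \<in> C \<Longrightarrow> c' \<in> C \<Longrightarrow> (induced W E)\<^sup>*\<^sup>* c c'"
  shows "is_clique E {s. E x s \<and> (\<exists>c\<in>C. E s c)}"
  unfolding is_clique_def
proof (intro ballI impI)
  fix s t assume s: "s \<in> {s. E x s \<and> (\<exists>c\<in>C. E s c)}" and t: "t \<in> {s. E x s \<and> (\<exists>c\<in>C. E s c)}"
    and "s \<noteq> t"
  obtain c where c: "c \<in> C" "E s c" using s by blast
  obtain c' where c': "c' \<in> C" "E t c'" using t by blast
  obtain Q where Q: "Q \<noteq> []" "hd Q = c" "last Q = c'" "set Q \<subseteq> W" "successively E Q"
    using walk_of_rtranclp[OF C(2)[OF c(1) c'(1)]] c(1) C(1) by blast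
  have "E c' t" using c'(2) sg unfolding simple_graph_def by blast
  moreover have "successively E (s # Q)" using Q(1,2,5) c(2) by (cases Q) auto
  ultimately have "successively E (s # Q @ [t])"
    using Q(1,3) successively_append_iff[of E "s # Q" "[t]"] by simp
  thus "E s t"
    using chordal_no_walk_avoiding_neighbourhood[OF sg ch x W _ _ \<open>s \<noteq> t\<close> _ Q(4)] s t by blast
qed

definition dirac_property :: "'a set \<Rightarrow> ('a \<Rightarrow> 'a \<Rightarrow> bool) \<Rightarrow> bool" where
  "dirac_property V E \<longleftrightarrow> is_clique E V \<or>
     (\<exists>a\<in>V. \<exists>b\<in>V. a \<noteq> b \<and> \<not> E a b \<and> simplicial V E a \<and> simplicial V E b)"

text \<open>This is the form in which Dirac's lemma is used inductively: it supplies a simplicial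
  vertex avoiding any prescribed clique, provided some vertex avoids it.\<close>
lemma simplicial_outside_clique:
  assumes dirac: "dirac_property V E" and K: "is_clique E K" and v: "v \<in> V" "v \<notin> K"
  shows "\<exists>u\<in>V - K. simplicial V E u"
proof (cases "is_clique E V")
  case True
  have "is_clique E {u \<in> V. E v u}" using True by (rule clique_subset) auto
  hence "simplicial V E v" using v(1) unfolding simplicial_def by simp
  thus ?thesis using v by blast
next
  case False
  then obtain a b where ab: "a \<in> V" "b \<in> V" "a \<noteq> b" "\<not> E a b"
      "simplicial V E a" "simplicial V E b"
    using dirac unfolding dirac_property_def by blast
  have "a \<notin> K \<or> b \<notin> K" using ab(3,4) K unfolding is_clique_def by blast
  thus ?thesis using ab by blast
qed

text \<open>The separator of a component: for nonadjacent x, y let C be the component of y among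
  the non-neighbours of x, and S the set of neighbours of x adjacent to C.\<close>
lemma component_clique_separator:
  assumes sg: "simple_graph V E" and ch: "chordal V E"
    and xy: "x \<in> V" "y \<in> V" "x \<noteq> y" "\<not> E x y"
  obtains C S where "y \<in> C" "C \<union> S \<subseteq> V" "x \<notin> C \<union> S" "S \<inter> C = {}" "is_clique E S"
    "\<And>c u. c \<in> C \<Longrightarrow> E c u \<Longrightarrow> u \<in> C \<union> S"
proof -
  have sym: "\<And>a b. E a b \<Longrightarrow> E b a" and irr: "\<And>a. \<not> E a a"
    and inV: "\<And>a b. E a b \<Longrightarrow> a \<in> V \<and> b \<in> V"
    using sg unfolding simple_graph_def by blast+
  define W where "W = {w \<in> V. w \<noteq> x \<and> \<not> E x w}"
  define C where "C = {v. (induced W E)\<^sup>*\<^sup>* y v}"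
  define S where "S = {s. E x s \<and> (\<exists>c\<in>C. E s c)}"
  have W: "W \<subseteq> V" "x \<notin> W" "\<And>w. w \<in> W \<Longrightarrow> \<not> E x w" unfolding W_def by auto
  have yC: "y \<in> C" unfolding C_def by simp
  have CW: "C \<subseteq> W"
  proof
    fix v assume "v \<in> C"
    hence "(induced W E)\<^sup>*\<^sup>* y v" unfolding C_def by simp
    thus "v \<in> W" using xy unfolding W_def
      by (cases rule: rtranclp.cases) (auto simp: induced_def)
  qed
  have C_connected: "(induced W E)\<^sup>*\<^sup>* c c'" if "c \<in> C" "c' \<in> C" for c c'
  proof -
    have "symp (induced W E)"
    proof (rule sympI)
      fix a b assume "induced W E a b"
      thus "induced W E b a" using sym[of a b] unfolding induced_def by simp
    qed
    hence "symp (induced W E)\<^sup>*\<^sup>*" by (rule symp_rtranclp)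
    moreover have "(induced W E)\<^sup>*\<^sup>* y c" using that(1) unfolding C_def by simp
    ultimately have "(induced W E)\<^sup>*\<^sup>* c y" by (rule sympD)
    thus ?thesis using that(2) unfolding C_def by simp
  qed
  have "is_clique E S"
    unfolding S_def by (rule attachments_of_connected_set_clique[OF sg ch xy(1) W CW C_connected])
  moreover have "u \<in> C \<union> S" if "c \<in> C" "E c u" for c u
  proof (cases "E x u")
    case True thus ?thesis using that(1) sym[OF that(2)] unfolding S_def by blast
  next
    case False
    have "c \<in> W" using that CW by auto
    hence "u \<noteq> x" using sym[OF that(2)] W(3) by blast
    hence "u \<in> W" using False inV[OF that(2)] unfolding W_def by simp
    hence "induced W E c u" using that CW unfolding induced_def by auto
    thus ?thesis using that(1) unfolding C_def by (simp add: rtranclp.rtrancl_into_rtrancl)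
  qed
  moreover have "S \<inter> C = {}" "x \<notin> C \<union> S" using CW W irr unfolding S_def by auto
  moreover have "C \<union> S \<subseteq> V" using CW W(1) inV unfolding S_def by blast
  ultimately show ?thesis using that yC by blast
qed

text \<open>If the graph is not complete,
  take the clique separator S of the component C of a vertex y with respect to a vertex x
  nonadjacent to y.  A simplicial vertex of the subgraph on C \<union> S lying in C, and one of
  the subgraph on V - C lying outside S, are simplicial in the whole graph, nonadjacent and
  distinct.\<close>
lemma chordal_dirac:
  assumes "simple_graph V E" "chordal V E"
  shows "dirac_property V E"
  using assms
proof (induction "card V" arbitrary: V E rule: less_induct)
  case less
  note sg = less.prems(1) and ch = less.prems(2)
  have sym: "\<And>a b. E a b \<Longrightarrow> E b a" and finV: "finite V"
    using sg unfolding simple_graph_def by blast+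
  have IH: "dirac_property U (induced U E)" if "U \<subset> V" for U
    using less.hyps[OF psubset_card_mono[OF finV that]] that
      simple_graph_induced[OF sg] chordal_induced[OF ch] by blast
  show ?case
  proof (cases "is_clique E V")
    case True thus ?thesis unfolding dirac_property_def by simp
  next
    case False
    then obtain x y where xy: "x \<in> V" "y \<in> V" "x \<noteq> y" "\<not> E x y"
      unfolding is_clique_def by blast
    obtain C S where yC: "y \<in> C" and CSV: "C \<union> S \<subseteq> V" and SC: "x \<notin> C \<union> S" "S \<inter> C = {}"
      and S_clique: "is_clique E S" and C_nbrs: "\<And>c u. c \<in> C \<Longrightarrow> E c u \<Longrightarrow> u \<in> C \<union> S"
      using component_clique_separator[OF sg ch xy] by blast
    obtain c where c: "c \<in> C" "simplicial V E c"
    proof -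
      have "C \<union> S \<subset> V" using CSV SC xy(1) by blast
      hence dirac: "dirac_property (C \<union> S) (induced (C \<union> S) E)" by (rule IH)
      have "is_clique (induced (C \<union> S) E) S" using S_clique clique_induced_iff[of S "C \<union> S" E] by blast
      moreover have "y \<in> C \<union> S" "y \<notin> S" using yC SC by auto
      ultimately obtain c where "c \<in> C" "simplicial (C \<union> S) (induced (C \<union> S) E) c"
        using simplicial_outside_clique[OF dirac] by blast
      thus ?thesis using simplicial_of_induced[OF CSV] C_nbrs that by blast
    qed
    obtain d where d: "d \<notin> C \<union> S" "simplicial V E d"
    proof -
      have "V - C \<subset> V" using yC CSV by blast
      hence dirac: "dirac_property (V - C) (induced (V - C) E)" by (rule IH)
      have "is_clique (induced (V - C) E) S"
        using S_clique clique_induced_iff[of S "V - C" E] SC CSV by blast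
      moreover have "x \<in> V - C" "x \<notin> S" using xy(1) SC by auto
      ultimately obtain d where d: "d \<in> V - C" "d \<notin> S" "simplicial (V - C) (induced (V - C) E) d"
        using simplicial_outside_clique[OF dirac] by blast
      have "u \<in> V - C" if "u \<in> V" "E d u" for u
        using C_nbrs[of u d] sym[OF that(2)] d(1,2) that(1) by blast
      thus ?thesis using simplicial_of_induced[of "V - C" V E d] d that by blast
    qed
    have "c \<noteq> d" "\<not> E c d" using c d C_nbrs by blast+
    thus ?thesis using c d unfolding dirac_property_def simplicial_def by blast
  qed
qed

lemma finite_peos: "finite V \<Longrightarrow> finite (peos V E)"
proof -
  assume "finite V"
  moreover have "peos V E \<subseteq> {xs. set xs \<subseteq> V \<and> length xs \<le> card V}"
    unfolding is_peo_def by (auto simp: distinct_card[symmetric])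
  ultimately show ?thesis using finite_lists_length_le finite_subset by blast
qed

lemma peo_cons:
  assumes v: "simplicial V E v"
    and peo: "is_peo (V - {v}) (induced (V - {v}) E) \<sigma>"
  shows "is_peo V E (v # \<sigma>)"
  unfolding is_peo_def
proof (intro conjI allI impI)
  have \<sigma>: "distinct \<sigma>" "set \<sigma> = V - {v}" using peo unfolding is_peo_def by auto
  thus "distinct (v # \<sigma>)" "set (v # \<sigma>) = V" using v unfolding simplicial_def by auto
  fix i assume i: "i < length (v # \<sigma>)"
  show "is_clique E {u \<in> set (drop i (v # \<sigma>)). E ((v # \<sigma>) ! i) u}"
  proof (cases i)
    case 0
    have "is_clique E {u \<in> V. E v u}" using v unfolding simplicial_def by simp
    moreover have "{u \<in> set (drop i (v # \<sigma>)). E ((v # \<sigma>) ! i) u} \<subseteq> {u \<in> V. E v u}"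
      using 0 \<sigma>(2) v unfolding simplicial_def by auto
    ultimately show ?thesis by (rule clique_subset)
  next
    case (Suc k)
    let ?N = "{u \<in> set (drop k \<sigma>). induced (V - {v}) E (\<sigma> ! k) u}"
    have k: "k < length \<sigma>" using i Suc by simp
    have sub: "set (drop k \<sigma>) \<subseteq> V - {v}" using set_drop_subset[of k \<sigma>] \<sigma>(2) by simp
    have "\<sigma> ! k \<in> V - {v}" using k \<sigma>(2) nth_mem by blast
    hence eq: "{u \<in> set (drop i (v # \<sigma>)). E ((v # \<sigma>) ! i) u} = ?N"
      using Suc sub unfolding induced_def by auto
    have "is_clique (induced (V - {v}) E) ?N" using peo k unfolding is_peo_def by blast
    moreover have "?N \<subseteq> V - {v}" using sub by blast
    ultimately show ?thesis unfolding eq by (simp add: clique_induced_iff)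
  qed
qed

text \<open>Hence orderings starting with distinct simplicial vertices are counted separately.\<close>
lemma card_peos_ge_sum:
  assumes sg: "simple_graph V E" and A: "\<And>v. v \<in> A \<Longrightarrow> simplicial V E v"
  shows "(\<Sum>v\<in>A. card (peos (V - {v}) (induced (V - {v}) E))) \<le> card (peos V E)"
proof -
  let ?P = "\<lambda>v. peos (V - {v}) (induced (V - {v}) E)"
  have finV: "finite V" using sg unfolding simple_graph_def by blast
  have "A \<subseteq> V" using A unfolding simplicial_def by blast
  hence finA: "finite A" using finV by (rule finite_subset)
  have fin: "finite ((#) v ` ?P v)" for v using finV by (simp add: finite_peos)
  have "(\<Sum>v\<in>A. card (?P v)) = (\<Sum>v\<in>A. card ((#) v ` ?P v))"
    by (simp add: card_image)
  also have "\<dots> = card (\<Union>v\<in>A. (#) v ` ?P v)"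
    using finA fin by (intro card_UN_disjoint[symmetric]) auto
  also have "\<dots> \<le> card (peos V E)"
    using finite_peos[OF finV] peo_cons[OF A] by (intro card_mono) auto
  finally show ?thesis .
qed

lemma two_simplicial_vertices:
  assumes sg: "simple_graph V E" and ch: "chordal V E" and two: "2 \<le> card V"
  obtains a b where "a \<noteq> b" "simplicial V E a" "simplicial V E b"
proof (cases "is_clique E V")
  case True
  have finV: "finite V" using sg unfolding simple_graph_def by blast
  have "\<not> card V \<le> Suc 0" using two by simp
  then obtain a b where ab: "a \<in> V" "b \<in> V" "a \<noteq> b"
    unfolding card_le_Suc0_iff_eq[OF finV] by blast
  have "simplicial V E u" if "u \<in> V" for u
    using that clique_subset[OF True, of "{w \<in> V. E u w}"] unfolding simplicial_def by auto
  thus ?thesis using that ab by blast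
next
  case False
  thus ?thesis using that chordal_dirac[OF sg ch] unfolding dirac_property_def by blast
qed

lemma card_peos_lower_bound:
  assumes "simple_graph V E" "chordal V E"
  shows "2 ^ card V \<le> 2 * card (peos V E)"
  using assms
proof (induction "card V" arbitrary: V E rule: less_induct)
  case less
  note sg = less.prems(1) and ch = less.prems(2)
  let ?P = "\<lambda>v. peos (V - {v}) (induced (V - {v}) E)"
  have finV: "finite V" using sg unfolding simple_graph_def by blast
  have IH: "2 ^ (card V - 1) \<le> 2 * card (?P v)" if "v \<in> V" for v
  proof -
    have "simple_graph (V - {v}) (induced (V - {v}) E)" "chordal (V - {v}) (induced (V - {v}) E)"
      using simple_graph_induced[OF sg] chordal_induced[OF ch] by blast+
    thus ?thesis
      using less.hyps[OF card_Diff1_less[OF finV that]] card_Diff_singleton[OF that] by simp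
  qed
  consider "card V = 0" | "card V = 1" | "2 \<le> card V" by linarith
  thus ?case
  proof cases
    case 1
    hence "peos V E = {[]}" using finV unfolding is_peo_def by auto
    thus ?thesis using 1 by simp
  next
    case 2
    then obtain v where V: "V = {v}" using card_1_singletonE by blast
    have "\<not> E v v" using sg unfolding simple_graph_def by blast
    hence "simplicial V E v" using V unfolding simplicial_def is_clique_def by auto
    hence "card (?P v) \<le> card (peos V E)" using card_peos_ge_sum[OF sg, of "{v}"] by simp
    thus ?thesis using IH[of v] V by simp
  next
    case 3
    then obtain a b where ab: "a \<noteq> b" "simplicial V E a" "simplicial V E b"
      using two_simplicial_vertices[OF sg ch] by blast
    have "\<And>v. v \<in> {a, b} \<Longrightarrow> simplicial V E v" using ab by blast
    hence "(\<Sum>v\<in>{a, b}. card (?P v)) \<le> card (peos V E)" by (rule card_peos_ge_sum[OF sg])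
    hence "card (?P a) + card (?P b) \<le> card (peos V E)" using ab(1) by simp
    moreover have "(2::nat) ^ card V = 2 ^ (card V - 1) + 2 ^ (card V - 1)"
      using 3 by (cases "card V") auto
    ultimately show ?thesis using IH[of a] IH[of b] ab unfolding simplicial_def by linarith
  qed
qed

theorem mainTheorem4:
  shows "\<exists>c::real. c > 0 \<and>
    (\<forall>(V::nat set) E. simple_graph V E \<and> chordal V E \<longrightarrow>
       real (card {\<sigma>. is_peo V E \<sigma>}) \<ge> c * 2 ^ card V)"
proof (intro exI[of _ "1/2"] conjI allI impI)
  fix V :: "nat set" and E assume "simple_graph V E \<and> chordal V E"
  hence "2 ^ card V \<le> 2 * card (peos V E)" using card_peos_lower_bound by blast
  hence "real (2 ^ card V) \<le> real (2 * card (peos V E))" by (simp only: of_nat_le_iff)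
  thus "1/2 * 2 ^ card V \<le> real (card (peos V E))" by simp
qed simp

end
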